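(* Let $f^0$ be $f$ with $\gamma_{\rm P}$ replaced by $0$. Then $f^0$ has a unique maximiser $(z^{Q,\star}(0),z^{S,\star}(0))$, which is the limit as $\gamma_{\rm P}\downarrow0$ of the maximiser of $f$. Setting $s^0_{i,n}=z^{S,i,\star}(0)$ and $q^0_{i,j,n}=\nu_jz^{Q,i,j,\star}(0)$, for all $i,j$: $$q^0_{i,j,n}=-\frac{\sigma}{\sqrt n}s^0_{i,n}\rho_j\ (j\ne i),\qquad q^0_{i,i,n}=\frac1{A_i}\Big(\frac1{c_i\nu_i}-\frac{\gamma_i\sigma}{\sqrt n}\rho_is^0_{i,n}\Big),\qquad s^0_{i,n}=-\frac{\sqrt n}{\sigma}\frac{\rho_i}{A_ic_i\nu_i(n-\pi_{i,n})},$$ where $A_i=\gamma_i+\frac{1}{c_i\nu_i^2}$ and $\pi_{i,n}=\|\rho\|^2-\rho_i^2+\frac{\gamma_i}{A_i}\rho_i^2\in[0,n)$. In particular $\mathrm{sgn}(s^0_{i,n})=-\mathrm{sgn}(\rho_i)$, $z^{Q,i,i,\star}(0)>0$ for all $i$, and $\mathrm{sgn}(z^{Q,i,j,\star}(0))=\mathrm{sgn}(\rho_i\rho_j)$ for $j\ne i$.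
   Context: Fix an integer $n\ge1$ and parameters $\sigma>0$, $\gamma_{\rm P}>0$, and for each $i\in\{1,\dots,n\}$: $c_i>0$, $\gamma_i>0$, $\nu_i>0$, $\rho_i\in(-1,1)$. Write $\nu=(\nu_1,\dots,\nu_n)^\top$, $\rho=(\rho_1,\dots,\rho_n)^\top$, $\|\rho\|$ its Euclidean norm. The variables are a matrix $z^Q=(z^{Q,i,j})_{i,j}\in\mathbb{R}^{n\times n}$ ($i$ row, $j$ column) and a vector $z^S=(z^{S,1},\dots,z^{S,n})^\top\in\mathbb{R}^n$. Define $f:\mathbb{R}^{n\times n}\times\mathbb{R}^n\to\mathbb{R}$ by $$f(z^Q,z^S)=-\frac1n\sum_{i=1}^n\Big(\frac{(z^{Q,i,i})^2}{2c_i}+\frac{\gamma_i}{2}\sum_{j=1}^n\nu_j^2(z^{Q,i,j})^2+\frac{\gamma_i\sigma^2}{2}(z^{S,i})^2+\frac{\gamma_i\sigma}{\sqrt n}z^{S,i}\sum_{j=1}^n\rho_j\nu_jz^{Q,i,j}-\frac{z^{Q,i,i}}{c_i}\Big)-\frac{\gamma_{\rm P}}{2n^2}\sum_{i=1}^n\Big(\Big(\nu_i-\nu_i\sum_{j=1}^nz^{Q,j,i}-\frac{\rho_i\sigma}{\sqrt n}\sum_{j=1}^nz^{S,j}\Big)^2+\frac{(1-\rho_i^2)\sigma^2}{n}\Big(\sum_{j=1}^nz^{S,j}\Big)^2\Big).$$ For $\gamma_{\rm P}>0$, $f$ has a unique global maximiser. *)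

theory Defs
  imports "HOL-Analysis.Analysis"
begin

text \<open>Index set {1..n} is rendered as a finite type 'n, with n = CARD('n).
  z^Q is a matrix real^'n^'n with (zQ $ i $ j) = z^{Q,i,j} (row i, column j);
  z^S is a vector real^'n.\<close>

definition fobj :: "real \<Rightarrow> real \<Rightarrow> ('n::finite \<Rightarrow> real) \<Rightarrow> ('n \<Rightarrow> real) \<Rightarrow> ('n \<Rightarrow> real)
    \<Rightarrow> ('n \<Rightarrow> real) \<Rightarrow> (real^'n^'n) \<times> (real^'n) \<Rightarrow> real" where
  "fobj \<sigma> gP c gam nu rho z =
    (let zQ = fst z; zS = snd z; n = real CARD('n) in
      - (1 / n) * (\<Sum>i\<in>UNIV.
          (zQ $ i $ i)^2 / (2 * c i)
          + gam i / 2 * (\<Sum>j\<in>UNIV. (nu j)^2 * (zQ $ i $ j)^2)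
          + gam i * \<sigma>^2 / 2 * (zS $ i)^2
          + gam i * \<sigma> / sqrt n * (zS $ i) * (\<Sum>j\<in>UNIV. rho j * nu j * (zQ $ i $ j))
          - (zQ $ i $ i) / c i)
      - gP / (2 * n^2) * (\<Sum>i\<in>UNIV.
          (nu i - nu i * (\<Sum>j\<in>UNIV. zQ $ j $ i) - rho i * \<sigma> / sqrt n * (\<Sum>j\<in>UNIV. zS $ j))^2
          + (1 - (rho i)^2) * \<sigma>^2 / n * (\<Sum>j\<in>UNIV. zS $ j)^2))"

definition is_global_max :: "('a \<Rightarrow> real) \<Rightarrow> 'a \<Rightarrow> bool" where
  "is_global_max F z \<longleftrightarrow> (\<forall>w. F w \<le> F z)"

definition Acoef :: "('n \<Rightarrow> real) \<Rightarrow> ('n \<Rightarrow> real) \<Rightarrow> ('n \<Rightarrow> real) \<Rightarrow> 'n \<Rightarrow> real" where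
  "Acoef c gam nu i = gam i + 1 / (c i * (nu i)^2)"

definition pi_coef :: "('n::finite \<Rightarrow> real) \<Rightarrow> ('n \<Rightarrow> real) \<Rightarrow> ('n \<Rightarrow> real) \<Rightarrow> ('n \<Rightarrow> real) \<Rightarrow> 'n \<Rightarrow> real" where
  "pi_coef c gam nu rho i =
     (\<Sum>j\<in>UNIV. (rho j)^2) - (rho i)^2 + gam i / Acoef c gam nu i * (rho i)^2"

end

theory Submission
  imports Defs
begin

text \<open>For every \<open>\<gamma>\<^sub>P \<ge> 0\<close> the objective is an exact quadratic expansion about one explicit
  point \<open>z\<^sup>*\<close>:
  \<open>f(z) = f\<^sup>0(z\<^sup>*) - Q(z - z\<^sup>*) - \<gamma>\<^sub>P / (2n\<^sup>2) \<cdot> Pen(z)\<close>.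
  Here \<open>z\<^sup>*\<close> solves the first-order conditions of \<open>f\<^sup>0\<close>, which decouple row by row;
  \<open>Q\<close> is a quadratic form, coercive because \<open>|\<rho>\<^sub>j| < 1\<close> lets the cross term
  \<open>2 t \<rho>\<^sub>j \<nu>\<^sub>j x\<close> be absorbed by \<open>(\<nu>\<^sub>j x)\<^sup>2 + t\<^sup>2\<close>; and \<open>Pen \<ge> 0\<close> is convex.
  So \<open>f\<close> is coercive and strictly concave, with a unique maximiser \<open>z(\<gamma>\<^sub>P)\<close>, and
  \<open>f(z(\<gamma>\<^sub>P)) \<ge> f(z\<^sup>*)\<close> gives \<open>m \<parallel>z(\<gamma>\<^sub>P) - z\<^sup>*\<parallel>\<^sup>2 \<le> \<gamma>\<^sub>P Pen(z\<^sup>*) / (2n\<^sup>2) \<rightarrow> 0\<close>.\<close>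

lemma sq_add_cross_ge:
  fixes y t r :: real
  assumes "\<bar>r\<bar> \<le> 1"
  shows "(1 - \<bar>r\<bar>) * (y^2 + t^2) \<le> y^2 + 2 * t * r * y + t^2"
proof -
  have "- (2 * t * r * y) \<le> \<bar>r\<bar> * (2 * \<bar>t\<bar> * \<bar>y\<bar>)"
    using abs_ge_minus_self[of "2 * t * r * y"] by (simp add: abs_mult ac_simps)
  moreover have "0 \<le> \<bar>r\<bar> * (\<bar>y\<bar> - \<bar>t\<bar>)^2" by simp
  ultimately show ?thesis by (simp add: power2_diff algebra_simps)
qed

lemma square_midpoint_le:
  fixes p q :: real
  shows "((p + q) / 2)^2 \<le> (p^2 + q^2) / 2"
proof -
  have "0 \<le> (p - q)^2" by simp
  then show ?thesis by (simp add: power2_eq_square field_simps)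
qed

lemma global_max_exists_if_bounded_superlevel:
  fixes F :: "'a::euclidean_space \<Rightarrow> real"
  assumes "continuous_on UNIV F" and "bounded {z. F a \<le> F z}"
  shows "\<exists>z. is_global_max F z"
proof -
  let ?S = "{z. F a \<le> F z}"
  have "compact ?S"
    using assms by (simp add: compact_eq_bounded_closed closed_Collect_le)
  moreover have "a \<in> ?S" by simp
  ultimately obtain x where "x \<in> ?S" "\<forall>y\<in>?S. F y \<le> F x"
    using continuous_attains_sup[of ?S F] continuous_on_subset[OF assms(1)] by blast
  then have "F w \<le> F x" for w by (cases "F a \<le> F w") auto
  then show ?thesis unfolding is_global_max_def by blast
qed

lemma global_max_unique_if_midpoint_strictly_concave:
  fixes F :: "'a::real_vector \<Rightarrow> real"
  assumes "\<And>a b. a \<noteq> b \<Longrightarrow> F a + F b < 2 * F ((1/2) *\<^sub>R (a + b))"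
    and "is_global_max F a" and "is_global_max F b"
  shows "a = b"
proof -
  have "F ((1/2) *\<^sub>R (a + b)) \<le> F a" and "F ((1/2) *\<^sub>R (a + b)) \<le> F b"
    using assms(2,3) unfolding is_global_max_def by auto
  then show ?thesis using assms(1)[of a b] by fastforce
qed

lemma quadratic_minus_convex_midpoint_gt:
  fixes F Q P :: "'a::real_normed_vector \<Rightarrow> real"
  assumes F_eq: "\<And>z. F z = K - Q (z - z0) - P z"
    and Q_coercive: "\<And>d. m * (norm d)^2 \<le> Q d" and m_pos: "m > 0"
    and Q_parallelogram: "\<And>x y. Q ((1/2) *\<^sub>R (x + y)) + Q ((1/2) *\<^sub>R (x - y)) = (Q x + Q y) / 2"
    and P_midpoint_convex: "\<And>a b. P ((1/2) *\<^sub>R (a + b)) \<le> (P a + P b) / 2"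
    and "a \<noteq> b"
  shows "F a + F b < 2 * F ((1/2) *\<^sub>R (a + b))"
proof -
  have "(1/2) *\<^sub>R (a + b) - z0 = (1/2) *\<^sub>R ((a - z0) + (b - z0))"
    by (simp add: algebra_simps flip: scaleR_add_left)
  then have F_mid: "F ((1/2) *\<^sub>R (a + b))
      = K - Q ((1/2) *\<^sub>R ((a - z0) + (b - z0))) - P ((1/2) *\<^sub>R (a + b))"
    using F_eq by simp
  have "(1/2) *\<^sub>R ((a - z0) - (b - z0)) = (1/2) *\<^sub>R (a - b)"
    by (simp add: algebra_simps)
  then have Q_mid: "Q ((1/2) *\<^sub>R ((a - z0) + (b - z0))) + Q ((1/2) *\<^sub>R (a - b))
      = (Q (a - z0) + Q (b - z0)) / 2"
    using Q_parallelogram[of "a - z0" "b - z0"] by simp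
  have "0 < m * (norm ((1/2) *\<^sub>R (a - b)))^2" using \<open>a \<noteq> b\<close> m_pos by simp
  then show ?thesis
    using F_mid Q_mid F_eq[of a] F_eq[of b] P_midpoint_convex[of a b]
      Q_coercive[of "(1/2) *\<^sub>R (a - b)"]
    by argo
qed

lemma global_max_of_quadratic_minus_convex:
  fixes F Q P :: "'a::euclidean_space \<Rightarrow> real"
  assumes cont: "continuous_on UNIV F"
    and F_eq: "\<And>z. F z = K - Q (z - z0) - P z"
    and Q_coercive: "\<And>d. m * (norm d)^2 \<le> Q d" and m_pos: "m > 0"
    and Q_parallelogram: "\<And>x y. Q ((1/2) *\<^sub>R (x + y)) + Q ((1/2) *\<^sub>R (x - y)) = (Q x + Q y) / 2"
    and P_nonneg: "\<And>z. 0 \<le> P z"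
    and P_midpoint_convex: "\<And>a b. P ((1/2) *\<^sub>R (a + b)) \<le> (P a + P b) / 2"
  shows "\<exists>!z. is_global_max F z"
    and "\<And>z. is_global_max F z \<Longrightarrow> m * (norm (z - z0))^2 \<le> P z0"
proof -
  have Q0: "Q 0 = 0" using Q_parallelogram[of 0 0] by simp
  have superlevel: "m * (norm (z - z0))^2 \<le> P z0" if "F z0 \<le> F z" for z
    using that F_eq[of z] F_eq[of z0] Q0 P_nonneg[of z] Q_coercive[of "z - z0"] by simp
  have "bounded {z. F z0 \<le> F z}"
  proof (rule bounded_subset[OF bounded_cball])
    show "{z. F z0 \<le> F z} \<subseteq> cball z0 (sqrt (P z0 / m))"
    proof
      fix z assume "z \<in> {z. F z0 \<le> F z}"
      then have "(norm (z - z0))^2 \<le> P z0 / m" using superlevel m_pos by (simp add: field_simps)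
      then show "z \<in> cball z0 (sqrt (P z0 / m))"
        by (simp add: dist_norm norm_minus_commute real_le_rsqrt)
    qed
  qed
  then obtain x where "is_global_max F x"
    using global_max_exists_if_bounded_superlevel[OF cont] by blast
  moreover have "F a + F b < 2 * F ((1/2) *\<^sub>R (a + b))" if "a \<noteq> b" for a b
    using quadratic_minus_convex_midpoint_gt[OF F_eq Q_coercive m_pos Q_parallelogram
        P_midpoint_convex that] .
  ultimately show "\<exists>!z. is_global_max F z"
    using global_max_unique_if_midpoint_strictly_concave by blast
  show "m * (norm (z - z0))^2 \<le> P z0" if "is_global_max F z" for z
    using that superlevel unfolding is_global_max_def by blast
qed

lemma card_ge_1: "1 \<le> real CARD('n::finite)"
  by (simp add: Suc_le_eq)

lemma sqrt_card_pos: "0 < sqrt (real CARD('n::finite))"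
  using card_ge_1 by simp

type_synonym 'n point = "(real^'n^'n) \<times> (real^'n)"

locale fobj_setting =
  fixes \<sigma> :: real and c gam nu rho :: "'n::finite \<Rightarrow> real"
  assumes sigma_pos: "\<sigma> > 0" and c_pos: "\<And>i. c i > 0" and gam_pos: "\<And>i. gam i > 0"
    and nu_pos: "\<And>i. nu i > 0" and rho_bounds: "\<And>i. -1 < rho i \<and> rho i < 1"
begin

lemma abs_rho_less_1: "\<bar>rho i\<bar> < 1"
  using rho_bounds[of i] by auto

lemma one_minus_rho_sq_nonneg: "0 \<le> 1 - (rho i)^2"
  using abs_rho_less_1[of i] abs_square_le_1 by fastforce

definition row_form :: "'n \<Rightarrow> 'n point \<Rightarrow> real" where
  "row_form i d = (fst d $ i $ i)^2 / (2 * c i)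
     + gam i / 2 * (\<Sum>j\<in>UNIV. (nu j)^2 * (fst d $ i $ j)^2)
     + gam i * \<sigma>^2 / 2 * (snd d $ i)^2
     + gam i * \<sigma> / sqrt (real CARD('n)) * snd d $ i * (\<Sum>j\<in>UNIV. rho j * nu j * fst d $ i $ j)"

definition row_bilinear :: "'n \<Rightarrow> 'n point \<Rightarrow> 'n point \<Rightarrow> real" where
  "row_bilinear i a b = fst a $ i $ i * fst b $ i $ i / (2 * c i)
     + gam i / 2 * (\<Sum>j\<in>UNIV. (nu j)^2 * fst a $ i $ j * fst b $ i $ j)
     + gam i * \<sigma>^2 / 2 * snd a $ i * snd b $ i
     + gam i * \<sigma> / sqrt (real CARD('n)) / 2
         * (snd a $ i * (\<Sum>j\<in>UNIV. rho j * nu j * fst b $ i $ j)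
            + snd b $ i * (\<Sum>j\<in>UNIV. rho j * nu j * fst a $ i $ j))"

definition quad_form :: "'n point \<Rightarrow> real" where
  "quad_form d = (\<Sum>i\<in>UNIV. row_form i d) / real CARD('n)"

definition penalty :: "'n point \<Rightarrow> real" where
  "penalty z = (\<Sum>i\<in>UNIV.
     (nu i - nu i * (\<Sum>j\<in>UNIV. fst z $ j $ i)
        - rho i * \<sigma> / sqrt (real CARD('n)) * (\<Sum>j\<in>UNIV. snd z $ j))^2
     + (1 - (rho i)^2) * \<sigma>^2 / real CARD('n) * (\<Sum>j\<in>UNIV. snd z $ j)^2)"

lemma fobj_eq_row_forms:
  "fobj \<sigma> gP c gam nu rho z
     = - (\<Sum>i\<in>UNIV. row_form i z - fst z $ i $ i / c i) / real CARD('n)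
       - gP / (2 * (real CARD('n))^2) * penalty z"
  unfolding fobj_def row_form_def penalty_def Let_def by (simp add: algebra_simps)

lemma row_form_add: "row_form i (a + b) = row_form i a + 2 * row_bilinear i a b + row_form i b"
  unfolding row_form_def row_bilinear_def
  by (simp add: algebra_simps power2_eq_square sum.distrib sum_distrib_left add_divide_distrib
      sum_divide_distrib diff_divide_distrib)

lemma row_form_parallelogram:
  "row_form i ((1/2) *\<^sub>R (x + y)) + row_form i ((1/2) *\<^sub>R (x - y))
     = (row_form i x + row_form i y) / 2"
  unfolding row_form_def
  by (simp add: algebra_simps power2_eq_square sum.distrib sum_distrib_left sum_subtractf
      sum_divide_distrib add_divide_distrib diff_divide_distrib)

lemma quad_form_parallelogram:
  "quad_form ((1/2) *\<^sub>R (x + y)) + quad_form ((1/2) *\<^sub>R (x - y))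
     = (quad_form x + quad_form y) / 2"
  unfolding quad_form_def
  by (simp add: row_form_parallelogram sum.distrib[symmetric] sum_divide_distrib[symmetric]
      add_divide_distrib[symmetric])

definition coercivity_const :: real where
  "coercivity_const = Min ((\<lambda>(i, j). gam i * (1 - \<bar>rho j\<bar>) * min ((nu j)^2) (\<sigma>^2 / real CARD('n)) / 2)
     ` UNIV)"

lemma coercivity_const_le:
  "coercivity_const \<le> gam i * (1 - \<bar>rho j\<bar>) * min ((nu j)^2) (\<sigma>^2 / real CARD('n)) / 2"
  unfolding coercivity_const_def by (rule Min_le) (auto intro: image_eqI[where x = "(i, j)"])

lemma coercivity_const_pos: "0 < coercivity_const"
proof -
  have "0 < gam i * (1 - \<bar>rho j\<bar>) * min ((nu j)^2) (\<sigma>^2 / real CARD('n)) / 2" for i j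
    using gam_pos[of i] abs_rho_less_1[of j] nu_pos[of j] sigma_pos card_ge_1 by simp
  then show ?thesis unfolding coercivity_const_def by (subst Min_gr_iff) auto
qed

lemma row_form_summand_ge:
  fixes x s :: real
  defines "t \<equiv> \<sigma> * s / sqrt (real CARD('n))"
  shows "coercivity_const * (x^2 + s^2)
    \<le> gam i / 2 * ((nu j * x)^2 + 2 * t * rho j * (nu j * x) + t^2)"
proof -
  let ?m = "min ((nu j)^2) (\<sigma>^2 / real CARD('n))"
  have t_sq: "t^2 = \<sigma>^2 / real CARD('n) * s^2"
    unfolding t_def using card_ge_1 by (simp add: power_divide power_mult_distrib)
  have "?m * (x^2 + s^2) \<le> (nu j * x)^2 + t^2"
    unfolding t_sq power_mult_distrib distrib_left by (intro add_mono mult_right_mono) auto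
  then have "(1 - \<bar>rho j\<bar>) * (?m * (x^2 + s^2))
      \<le> (nu j * x)^2 + 2 * t * rho j * (nu j * x) + t^2"
    using sq_add_cross_ge[of "rho j" "nu j * x" t] abs_rho_less_1[of j]
    by (smt (verit) mult_left_mono)
  then have "gam i / 2 * ((1 - \<bar>rho j\<bar>) * (?m * (x^2 + s^2)))
      \<le> gam i / 2 * ((nu j * x)^2 + 2 * t * rho j * (nu j * x) + t^2)"
    using gam_pos[of i] by simp
  moreover have "coercivity_const * (x^2 + s^2)
      \<le> gam i / 2 * ((1 - \<bar>rho j\<bar>) * (?m * (x^2 + s^2)))"
    using mult_right_mono[OF coercivity_const_le[of i j], of "x^2 + s^2"] by simp
  ultimately show ?thesis by linarith
qed

lemma row_form_coercive:
  "coercivity_const * ((\<Sum>j\<in>UNIV. (fst d $ i $ j)^2) + (snd d $ i)^2) \<le> row_form i d"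
proof -
  define t where "t = \<sigma> * snd d $ i / sqrt (real CARD('n))"
  have "real CARD('n) * t^2 = \<sigma>^2 * (snd d $ i)^2"
    unfolding t_def using card_ge_1 by (simp add: power_divide power_mult_distrib)
  then have row_form_eq: "row_form i d = (fst d $ i $ i)^2 / (2 * c i) + (\<Sum>j\<in>UNIV.
      gam i / 2 * ((nu j * fst d $ i $ j)^2 + 2 * t * rho j * (nu j * fst d $ i $ j) + t^2))"
    unfolding row_form_def t_def
    by (simp add: sum.distrib sum_distrib_left power_mult_distrib algebra_simps)
  have "coercivity_const * (snd d $ i)^2 \<le> real CARD('n) * (coercivity_const * (snd d $ i)^2)"
    using card_ge_1 coercivity_const_pos
      mult_right_mono[of 1 "real CARD('n)" "coercivity_const * (snd d $ i)^2"] by simp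
  then have "coercivity_const * ((\<Sum>j\<in>UNIV. (fst d $ i $ j)^2) + (snd d $ i)^2)
      \<le> (\<Sum>j\<in>UNIV. coercivity_const * ((fst d $ i $ j)^2 + (snd d $ i)^2))"
    by (simp add: sum.distrib sum_distrib_left algebra_simps)
  also have "\<dots> \<le> (\<Sum>j\<in>UNIV.
      gam i / 2 * ((nu j * fst d $ i $ j)^2 + 2 * t * rho j * (nu j * fst d $ i $ j) + t^2))"
    unfolding t_def by (intro sum_mono row_form_summand_ge)
  also have "\<dots> \<le> row_form i d"
    unfolding row_form_eq using c_pos[of i] by simp
  finally show ?thesis .
qed

lemma quad_form_coercive: "coercivity_const / real CARD('n) * (norm d)^2 \<le> quad_form d"
proof -
  have "(norm d)^2 = (\<Sum>i\<in>UNIV. (\<Sum>j\<in>UNIV. (fst d $ i $ j)^2) + (snd d $ i)^2)"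
    by (cases d) (simp add: norm_Pair power2_norm_eq_inner inner_vec_def sum.distrib sum_nonneg
        add_nonneg_nonneg flip: power2_eq_square)
  then have "coercivity_const * (norm d)^2
      = (\<Sum>i\<in>UNIV. coercivity_const * ((\<Sum>j\<in>UNIV. (fst d $ i $ j)^2) + (snd d $ i)^2))"
    by (simp add: sum_distrib_left)
  also have "\<dots> \<le> (\<Sum>i\<in>UNIV. row_form i d)"
    by (intro sum_mono row_form_coercive)
  finally show ?thesis
    unfolding quad_form_def using card_ge_1 by (simp add: divide_right_mono)
qed

lemma quad_form_nonneg: "0 \<le> quad_form d"
  using quad_form_coercive[of d] coercivity_const_pos card_ge_1
  by (smt (verit) divide_nonneg_nonneg zero_le_mult_iff zero_le_power2)

lemma penalty_nonneg: "0 \<le> penalty z"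
  unfolding penalty_def using one_minus_rho_sq_nonneg by (intro sum_nonneg add_nonneg_nonneg) auto

lemma penalty_midpoint_convex: "penalty ((1/2) *\<^sub>R (a + b)) \<le> (penalty a + penalty b) / 2"
proof -
  define u where "u z i = nu i - nu i * (\<Sum>j\<in>UNIV. fst z $ j $ i)
    - rho i * \<sigma> / sqrt (real CARD('n)) * (\<Sum>j\<in>UNIV. snd z $ j)" for z :: "'n point" and i
  define v where "v z = (\<Sum>j\<in>UNIV. snd z $ j)" for z :: "'n point"
  define k where "k i = (1 - (rho i)^2) * \<sigma>^2 / real CARD('n)" for i
  have penalty_eq: "penalty z = (\<Sum>i\<in>UNIV. (u z i)^2 + k i * (v z)^2)" for z
    unfolding penalty_def u_def v_def k_def by simp
  have u_mid: "u ((1/2) *\<^sub>R (a + b)) i = (u a i + u b i) / 2" for i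
    unfolding u_def
    by (simp add: sum.distrib algebra_simps sum_divide_distrib[symmetric] add_divide_distrib)
  have v_mid: "v ((1/2) *\<^sub>R (a + b)) = (v a + v b) / 2"
    unfolding v_def by (simp add: sum.distrib sum_divide_distrib[symmetric])
  have "penalty ((1/2) *\<^sub>R (a + b))
      = (\<Sum>i\<in>UNIV. ((u a i + u b i) / 2)^2 + k i * ((v a + v b) / 2)^2)"
    unfolding penalty_eq u_mid v_mid ..
  also have "\<dots> \<le> (\<Sum>i\<in>UNIV. ((u a i)^2 + (u b i)^2) / 2 + k i * (((v a)^2 + (v b)^2) / 2))"
    using one_minus_rho_sq_nonneg
    by (intro sum_mono add_mono square_midpoint_le mult_left_mono) (simp_all add: k_def)
  also have "\<dots> = (penalty a + penalty b) / 2"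
    unfolding penalty_eq
    by (simp add: sum.distrib sum_divide_distrib[symmetric] algebra_simps add_divide_distrib)
  finally show ?thesis .
qed

lemma penalty_continuous: "continuous_on UNIV penalty"
  unfolding penalty_def by (intro continuous_intros)

lemma quad_form_continuous: "continuous_on UNIV quad_form"
  unfolding quad_form_def row_form_def using c_pos sqrt_card_pos card_ge_1
  by (auto intro!: continuous_intros simp: less_imp_neq[symmetric])

lemma Acoef_pos: "0 < Acoef c gam nu i"
  unfolding Acoef_def using gam_pos[of i] c_pos[of i] nu_pos[of i] by (simp add: add_pos_pos)

lemma gam_div_Acoef_less_1: "gam i / Acoef c gam nu i < 1"
  using c_pos[of i] nu_pos[of i] Acoef_pos[of i] unfolding Acoef_def by simp

lemma pi_coef_nonneg: "0 \<le> pi_coef c gam nu rho i"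
proof -
  have "(\<Sum>j\<in>UNIV. (rho j)^2) - (rho i)^2 = (\<Sum>j\<in>UNIV - {i}. (rho j)^2)"
    by (simp add: sum.remove[of UNIV i])
  moreover have "0 \<le> (\<Sum>j\<in>UNIV - {i}. (rho j)^2)" by (simp add: sum_nonneg)
  moreover have "0 \<le> gam i / Acoef c gam nu i * (rho i)^2" using gam_pos[of i] Acoef_pos[of i] by simp
  ultimately show ?thesis unfolding pi_coef_def by simp
qed

lemma pi_coef_less_card: "pi_coef c gam nu rho i < real CARD('n)"
proof -
  have "gam i / Acoef c gam nu i * (rho i)^2 \<le> (rho i)^2"
    using mult_right_mono[of "gam i / Acoef c gam nu i" 1 "(rho i)^2"] gam_div_Acoef_less_1[of i]
    by simp
  then have "pi_coef c gam nu rho i \<le> (\<Sum>j\<in>UNIV. (rho j)^2)" unfolding pi_coef_def by simp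
  also have "\<dots> < (\<Sum>j\<in>(UNIV::'n set). 1)"
    using abs_rho_less_1 by (intro sum_strict_mono) (auto simp: abs_square_less_1)
  finally show ?thesis by simp
qed

definition denom :: "'n \<Rightarrow> real" where
  "denom i = Acoef c gam nu i * c i * nu i * (real CARD('n) - pi_coef c gam nu rho i)"

lemma denom_pos: "0 < denom i"
  unfolding denom_def using Acoef_pos[of i] c_pos[of i] nu_pos[of i] pi_coef_less_card[of i] by simp

text \<open>At the maximiser, \<open>t0 i\<close> is \<open>\<sigma> / \<surd>n\<close> times the S-component of row \<open>i\<close>,
  and \<open>q0 i\<close> is \<open>\<nu>\<^sub>i\<close> times its diagonal Q-component.\<close>

definition t0 :: "'n \<Rightarrow> real" where
  "t0 i = - rho i / denom i"

definition q0 :: "'n \<Rightarrow> real" where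
  "q0 i = (1 / (c i * nu i) - gam i * t0 i * rho i) / Acoef c gam nu i"

definition zstar :: "'n point" where
  "zstar = ((\<chi> i j. if j = i then q0 i / nu i else - t0 i * rho j / nu j),
            (\<chi> i. sqrt (real CARD('n)) * t0 i / \<sigma>))"

lemma zstar_Q: "fst zstar $ i $ j = (if j = i then q0 i / nu i else - t0 i * rho j / nu j)"
  unfolding zstar_def by simp

lemma zstar_S: "snd zstar $ i = sqrt (real CARD('n)) * t0 i / \<sigma>"
  unfolding zstar_def by simp

lemma scaled_zstar_S: "\<sigma> / sqrt (real CARD('n)) * snd zstar $ i = t0 i"
  unfolding zstar_S using sigma_pos sqrt_card_pos by simp

lemma zstar_stationary_offdiag: "j \<noteq> i \<Longrightarrow> nu j * fst zstar $ i $ j + t0 i * rho j = 0"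
  unfolding zstar_Q using nu_pos[of j] by simp

lemma zstar_stationary_diag:
  "gam i * nu i * (nu i * fst zstar $ i $ i + t0 i * rho i) + (fst zstar $ i $ i - 1) / c i = 0"
proof -
  have A_q0: "Acoef c gam nu i * q0 i = 1 / (c i * nu i) - gam i * t0 i * rho i"
    unfolding q0_def using Acoef_pos[of i] by simp
  have "gam i * nu i * (nu i * (q0 i / nu i) + t0 i * rho i) + (q0 i / nu i - 1) / c i
      = nu i * (Acoef c gam nu i * q0 i) + gam i * nu i * t0 i * rho i - 1 / c i"
    unfolding Acoef_def using c_pos[of i] nu_pos[of i] by (simp add: field_simps power2_eq_square)
  also have "\<dots> = 0"
    unfolding A_q0 using c_pos[of i] nu_pos[of i] by (simp add: field_simps)
  finally show ?thesis by (simp add: zstar_Q)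
qed

lemma sum_rho_nu_zstar_Q:
  "(\<Sum>j\<in>UNIV. rho j * nu j * fst zstar $ i $ j)
     = rho i * q0 i - t0 i * ((\<Sum>j\<in>UNIV. (rho j)^2) - (rho i)^2)"
proof -
  have "(\<Sum>j\<in>UNIV. rho j * nu j * fst zstar $ i $ j)
      = rho i * q0 i + (\<Sum>j\<in>UNIV - {i}. rho j * nu j * fst zstar $ i $ j)"
    using nu_pos[of i] by (simp add: sum.remove[of UNIV i] zstar_Q)
  also have "(\<Sum>j\<in>UNIV - {i}. rho j * nu j * fst zstar $ i $ j) = - t0 i * (\<Sum>j\<in>UNIV - {i}. (rho j)^2)"
    using nu_pos by (simp add: sum_distrib_left zstar_Q power2_eq_square less_imp_neq[symmetric]
        mult.left_commute)
  also have "(\<Sum>j\<in>UNIV - {i}. (rho j)^2) = (\<Sum>j\<in>UNIV. (rho j)^2) - (rho i)^2"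
    by (simp add: sum.remove[of UNIV i])
  finally show ?thesis by simp
qed

lemma zstar_stationary_S:
  "real CARD('n) * t0 i + (\<Sum>j\<in>UNIV. rho j * nu j * fst zstar $ i $ j) = 0"
proof -
  have "real CARD('n) * t0 i + (rho i * q0 i - t0 i * ((\<Sum>j\<in>UNIV. (rho j)^2) - (rho i)^2))
      = t0 i * (real CARD('n) - pi_coef c gam nu rho i) + rho i / (Acoef c gam nu i * c i * nu i)"
    unfolding q0_def pi_coef_def using Acoef_pos[of i] c_pos[of i] nu_pos[of i]
    by (simp add: field_simps power2_eq_square)
  also have "\<dots> = 0"
    unfolding t0_def denom_def using pi_coef_less_card[of i] by simp
  finally show ?thesis unfolding sum_rho_nu_zstar_Q .
qed

lemma zstar_first_order_condition: "2 * row_bilinear i zstar d = fst d $ i $ i / c i"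
proof -
  have Q_part: "gam i * (\<Sum>j\<in>UNIV. (nu j)^2 * fst zstar $ i $ j * fst d $ i $ j)
      + gam i * t0 i * (\<Sum>j\<in>UNIV. rho j * nu j * fst d $ i $ j)
      = fst d $ i $ i * (gam i * nu i * (nu i * fst zstar $ i $ i + t0 i * rho i))"
  proof -
    have "gam i * (\<Sum>j\<in>UNIV. (nu j)^2 * fst zstar $ i $ j * fst d $ i $ j)
        + gam i * t0 i * (\<Sum>j\<in>UNIV. rho j * nu j * fst d $ i $ j)
        = (\<Sum>j\<in>UNIV. fst d $ i $ j * (gam i * nu j * (nu j * fst zstar $ i $ j + t0 i * rho j)))"
      by (simp add: sum_distrib_left sum.distrib[symmetric] algebra_simps power2_eq_square)
    also have "\<dots> = fst d $ i $ i * (gam i * nu i * (nu i * fst zstar $ i $ i + t0 i * rho i))"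
      by (subst sum.remove[of UNIV i]) (simp_all add: zstar_stationary_offdiag)
    finally show ?thesis .
  qed
  define r where "r = sqrt (real CARD('n))"
  have "0 < r" and "real CARD('n) = r^2"
    unfolding r_def using sqrt_card_pos by simp_all
  then have "2 * row_bilinear i zstar d - fst d $ i $ i / c i
      = fst d $ i $ i * (fst zstar $ i $ i - 1) / c i
        + (gam i * (\<Sum>j\<in>UNIV. (nu j)^2 * fst zstar $ i $ j * fst d $ i $ j)
           + gam i * t0 i * (\<Sum>j\<in>UNIV. rho j * nu j * fst d $ i $ j))
        + gam i * \<sigma> / r * snd d $ i
          * (real CARD('n) * t0 i + (\<Sum>j\<in>UNIV. rho j * nu j * fst zstar $ i $ j))"
    unfolding row_bilinear_def zstar_S r_def[symmetric] using sigma_pos c_pos[of i]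
    by (simp add: field_simps power2_eq_square)
  also have "\<dots> = fst d $ i $ i * (gam i * nu i * (nu i * fst zstar $ i $ i + t0 i * rho i)
      + (fst zstar $ i $ i - 1) / c i)"
    unfolding Q_part zstar_stationary_S by (simp add: algebra_simps)
  finally show ?thesis by (simp add: zstar_stationary_diag)
qed

lemma fobj_expansion:
  "fobj \<sigma> gP c gam nu rho z
     = fobj \<sigma> 0 c gam nu rho zstar - quad_form (z - zstar) - gP / (2 * (real CARD('n))^2) * penalty z"
proof -
  have "row_form i z - fst z $ i $ i / c i
      = (row_form i zstar - fst zstar $ i $ i / c i) + row_form i (z - zstar)" for i
    using row_form_add[of i zstar "z - zstar"] zstar_first_order_condition[of i "z - zstar"]
    by (simp add: diff_divide_distrib)
  then show ?thesis
    unfolding fobj_eq_row_forms[of gP z] fobj_eq_row_forms[of 0 zstar] quad_form_def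
    by (simp add: sum.distrib add_divide_distrib diff_divide_distrib)
qed

lemma fobj_continuous: "continuous_on UNIV (fobj \<sigma> gP c gam nu rho)"
proof -
  have "continuous_on UNIV (\<lambda>z. fobj \<sigma> 0 c gam nu rho zstar - quad_form (z - zstar)
      - gP / (2 * (real CARD('n))^2) * penalty z)"
    by (intro continuous_intros continuous_on_compose2[OF quad_form_continuous] penalty_continuous) auto
  moreover have "fobj \<sigma> gP c gam nu rho = (\<lambda>z. fobj \<sigma> 0 c gam nu rho zstar
      - quad_form (z - zstar) - gP / (2 * (real CARD('n))^2) * penalty z)"
    by (intro ext fobj_expansion)
  ultimately show ?thesis by simp
qed

lemma
  assumes "0 \<le> gP"
  shows fobj_unique_global_max: "\<exists>!z. is_global_max (fobj \<sigma> gP c gam nu rho) z"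
    and fobj_global_max_near_zstar: "is_global_max (fobj \<sigma> gP c gam nu rho) z \<Longrightarrow>
      coercivity_const / real CARD('n) * (norm (z - zstar))^2
        \<le> gP / (2 * (real CARD('n))^2) * penalty zstar"
proof -
  let ?k = "gP / (2 * (real CARD('n))^2)"
  have k_nonneg: "0 \<le> ?k" using assms by simp
  have P_nonneg: "0 \<le> ?k * penalty z" for z
    using k_nonneg penalty_nonneg by (rule mult_nonneg_nonneg)
  have P_midpoint_convex: "?k * penalty ((1/2) *\<^sub>R (a + b)) \<le> (?k * penalty a + ?k * penalty b) / 2" for a b
  proof -
    have "?k * penalty ((1/2) *\<^sub>R (a + b)) \<le> ?k * ((penalty a + penalty b) / 2)"
      using penalty_midpoint_convex k_nonneg by (rule mult_left_mono)
    then show ?thesis by (simp add: distrib_left add_divide_distrib)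
  qed
  have m_pos: "0 < coercivity_const / real CARD('n)"
    using coercivity_const_pos card_ge_1 by simp
  note max = global_max_of_quadratic_minus_convex[where P = "\<lambda>z. ?k * penalty z",
      OF fobj_continuous fobj_expansion quad_form_coercive m_pos quad_form_parallelogram
      P_nonneg P_midpoint_convex]
  show "\<exists>!z. is_global_max (fobj \<sigma> gP c gam nu rho) z" by (rule max(1))
  show "is_global_max (fobj \<sigma> gP c gam nu rho) z \<Longrightarrow>
      coercivity_const / real CARD('n) * (norm (z - zstar))^2 \<le> ?k * penalty zstar"
    by (rule max(2))
qed

lemma zstar_global_max_zero: "is_global_max (fobj \<sigma> 0 c gam nu rho) zstar"
  unfolding is_global_max_def
proof
  fix w
  have "fobj \<sigma> 0 c gam nu rho w = fobj \<sigma> 0 c gam nu rho zstar - quad_form (w - zstar)"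
    using fobj_expansion[of 0 w] by simp
  then show "fobj \<sigma> 0 c gam nu rho w \<le> fobj \<sigma> 0 c gam nu rho zstar"
    using quad_form_nonneg[of "w - zstar"] by linarith
qed

lemma the_global_max_zero: "(THE z. is_global_max (fobj \<sigma> 0 c gam nu rho) z) = zstar"
  by (rule the1_equality[OF fobj_unique_global_max[OF order_refl] zstar_global_max_zero])

lemma the_global_max_tendsto:
  "((\<lambda>gP. THE z. is_global_max (fobj \<sigma> gP c gam nu rho) z) \<longlongrightarrow> zstar) (at_right 0)"
proof -
  define C where "C = penalty zstar / (2 * (real CARD('n))^2) / (coercivity_const / real CARD('n))"
  have bound: "norm ((THE z. is_global_max (fobj \<sigma> gP c gam nu rho) z) - zstar) \<le> sqrt (gP * C)"
    if "0 < gP" for gP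
  proof -
    let ?z = "THE z. is_global_max (fobj \<sigma> gP c gam nu rho) z"
    have gP_nonneg: "0 \<le> gP" using that by simp
    have "is_global_max (fobj \<sigma> gP c gam nu rho) ?z"
      by (rule theI'[OF fobj_unique_global_max[OF gP_nonneg]])
    then have "coercivity_const / real CARD('n) * (norm (?z - zstar))^2
        \<le> gP / (2 * (real CARD('n))^2) * penalty zstar"
      by (rule fobj_global_max_near_zstar[OF gP_nonneg])
    then have "(norm (?z - zstar))^2 \<le> gP * C"
      unfolding C_def using coercivity_const_pos card_ge_1 by (simp add: field_simps)
    then show ?thesis by (simp add: real_le_rsqrt)
  qed
  have "((\<lambda>gP. sqrt (gP * C)) \<longlongrightarrow> sqrt (0 * C)) (at_right 0)"
    by (intro tendsto_intros)
  then have "((\<lambda>gP. sqrt (gP * C)) \<longlongrightarrow> 0) (at_right 0)" by simp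
  then have "((\<lambda>gP. (THE z. is_global_max (fobj \<sigma> gP c gam nu rho) z) - zstar) \<longlongrightarrow> 0) (at_right 0)"
  proof (rule Lim_null_comparison[rotated])
    show "\<forall>\<^sub>F gP in at_right 0.
        norm ((THE z. is_global_max (fobj \<sigma> gP c gam nu rho) z) - zstar) \<le> sqrt (gP * C)"
      using eventually_at_right_less[of 0] by (rule eventually_mono) (rule bound)
  qed
  then show ?thesis by (rule LIM_zero_cancel)
qed

lemma zstar_Q_offdiag:
  assumes "j \<noteq> i"
  shows "nu j * fst zstar $ i $ j = - (\<sigma> / sqrt (real CARD('n))) * snd zstar $ i * rho j"
proof -
  have "nu j * fst zstar $ i $ j = - t0 i * rho j"
    using zstar_stationary_offdiag[OF assms] by simp
  also have "\<dots> = - (\<sigma> / sqrt (real CARD('n)) * snd zstar $ i) * rho j"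
    by (simp only: scaled_zstar_S)
  finally show ?thesis by simp
qed

lemma zstar_Q_diag:
  "nu i * fst zstar $ i $ i = 1 / Acoef c gam nu i
     * (1 / (c i * nu i) - gam i * \<sigma> / sqrt (real CARD('n)) * rho i * snd zstar $ i)"
proof -
  have "gam i * \<sigma> / sqrt (real CARD('n)) * rho i * snd zstar $ i
      = gam i * rho i * (\<sigma> / sqrt (real CARD('n)) * snd zstar $ i)"
    by (simp add: divide_inverse ac_simps)
  then show ?thesis
    unfolding scaled_zstar_S using nu_pos[of i] by (simp add: zstar_Q q0_def ac_simps)
qed

lemma zstar_S_eq:
  "snd zstar $ i = - (sqrt (real CARD('n)) / \<sigma>) * rho i
     / (Acoef c gam nu i * c i * nu i * (real CARD('n) - pi_coef c gam nu rho i))"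
  unfolding zstar_S t0_def denom_def by simp

lemma sgn_zstar_S: "sgn (snd zstar $ i) = - sgn (rho i)"
proof -
  have "snd zstar $ i = - rho i * (sqrt (real CARD('n)) / (\<sigma> * denom i))"
    unfolding zstar_S t0_def by (simp add: ac_simps)
  moreover have "0 < sqrt (real CARD('n)) / (\<sigma> * denom i)"
    using sqrt_card_pos sigma_pos denom_pos[of i] by simp
  ultimately show ?thesis by (simp only: sgn_mult sgn_pos sgn_minus)
qed

lemma zstar_Q_diag_pos: "0 < fst zstar $ i $ i"
proof -
  have "- (gam i * t0 i * rho i) = gam i * (rho i)^2 / denom i"
    unfolding t0_def by (simp add: power2_eq_square)
  moreover have "0 < 1 / (c i * nu i)" using c_pos[of i] nu_pos[of i] by simp
  moreover have "0 \<le> gam i * (rho i)^2 / denom i" using gam_pos[of i] denom_pos[of i] by simp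
  ultimately have "0 < 1 / (c i * nu i) - gam i * t0 i * rho i" by linarith
  then have "0 < q0 i" unfolding q0_def using Acoef_pos[of i] by simp
  then show ?thesis using nu_pos[of i] by (simp add: zstar_Q)
qed

lemma sgn_zstar_Q_offdiag:
  assumes "j \<noteq> i"
  shows "sgn (fst zstar $ i $ j) = sgn (rho i * rho j)"
proof -
  have "fst zstar $ i $ j = rho i * rho j * (1 / (denom i * nu j))"
    using assms unfolding zstar_Q t0_def by simp
  moreover have "0 < 1 / (denom i * nu j)" using denom_pos[of i] nu_pos[of j] by simp
  ultimately show ?thesis by (simp only: sgn_mult sgn_pos)
qed

end

theorem mainTheorem11:
  fixes \<sigma> :: real and c gam nu rho :: "'n::finite \<Rightarrow> real"
  assumes "\<sigma> > 0"
    and "\<And>i. c i > 0" and "\<And>i. gam i > 0" and "\<And>i. nu i > 0"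
    and "\<And>i. -1 < rho i \<and> rho i < 1"
  shows "(\<exists>!z. is_global_max (fobj \<sigma> 0 c gam nu rho) z)
    \<and> ((\<lambda>gP. THE z. is_global_max (fobj \<sigma> gP c gam nu rho) z)
           \<longlongrightarrow> (THE z. is_global_max (fobj \<sigma> 0 c gam nu rho) z)) (at_right 0)
    \<and> (let z0 = (THE z. is_global_max (fobj \<sigma> 0 c gam nu rho) z);
             n = real CARD('n);
             s = (\<lambda>i. snd z0 $ i);
             q = (\<lambda>i j. nu j * (fst z0 $ i $ j));
             A = Acoef c gam nu;
             p = pi_coef c gam nu rho
         in (\<forall>i j. j \<noteq> i \<longrightarrow> q i j = - (\<sigma> / sqrt n) * s i * rho j)
          \<and> (\<forall>i. q i i = 1 / A i * (1 / (c i * nu i) - gam i * \<sigma> / sqrt n * rho i * s i))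
          \<and> (\<forall>i. s i = - (sqrt n / \<sigma>) * rho i / (A i * c i * nu i * (n - p i)))
          \<and> (\<forall>i. 0 \<le> p i \<and> p i < n)
          \<and> (\<forall>i. sgn (s i) = - sgn (rho i))
          \<and> (\<forall>i. fst z0 $ i $ i > 0)
          \<and> (\<forall>i j. j \<noteq> i \<longrightarrow> sgn (fst z0 $ i $ j) = sgn (rho i * rho j)))"
proof -
  interpret fobj_setting \<sigma> c gam nu rho
    using assms by unfold_locales auto
  show ?thesis
    unfolding Let_def the_global_max_zero
    by (intro conjI allI impI fobj_unique_global_max the_global_max_tendsto zstar_Q_offdiag
        zstar_Q_diag zstar_S_eq pi_coef_nonneg pi_coef_less_card sgn_zstar_S zstar_Q_diag_pos
        sgn_zstar_Q_offdiag order_refl)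
qed

end
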